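(* Let $U:\mathbb{R}\to\mathbb{R}$ be a twice continuously differentiable potential energy function with several stable solutions (local minimizers), let $y_{+}$ denote the largest stable solution of $U$, and assume that $y_{+}$ is the unique global minimizer of $U$, i.e. $U(y_{+})<U(y)$ for all $y\neq y_{+}$. Let $D>0$ be a constant coupling strength and $x_{\max}>0$. Then there is no pot-shaped stationary solution, i.e. there is no twice differentiable function $y:[-x_{\max},x_{\max}]\to\mathbb{R}$ satisfying $$0=-U'(y(x))+D\,y''(x)\quad\text{for } x\in(-x_{\max},x_{\max}),\qquad y(\pm x_{\max})=y_{+},$$ together with $y(0)<y(\pm x_{\max})$ and $y'(x)\ge 0$ for all $x\in(0,x_{\max})$.
   Context: The setting is the spatially-coupled dynamical system $\partial y/\partial t=-U'(y)+D\,\partial^{2}y/\partial x^{2}$ for $x\in(-x_{\max},x_{\max})$, $t\ge 0$, with boundary condition $y(\pm x_{\max},t)=y_{+}$, where the coupling function $D>0$ is a constant independent of $y$. A stationary solution is a function $y(x)$ satisfying $0=-U'(y)+D\,y''$ on $(-x_{\max},x_{\max})$ with $y(\pm x_{\max})=y_{+}$. A stable solution of $U$ means a local minimizer of $U$. A stationary solution $y(x)$ is called pot-shaped if (i) $y(0)<y(\pm x_{\max})$ and (ii) $dy/dx\ge 0$ for $x>0$. *)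

theory Defs
  imports "HOL-Analysis.Analysis"
begin

definition local_minimizer :: "(real \<Rightarrow> real) \<Rightarrow> real \<Rightarrow> bool" where
  "local_minimizer U y \<longleftrightarrow> (\<exists>e>0. \<forall>z. \<bar>z - y\<bar> < e \<longrightarrow> U y \<le> U z)"

definition stationary_solution ::
  "(real \<Rightarrow> real) \<Rightarrow> real \<Rightarrow> real \<Rightarrow> real \<Rightarrow>
   (real \<Rightarrow> real) \<Rightarrow> (real \<Rightarrow> real) \<Rightarrow> (real \<Rightarrow> real) \<Rightarrow> bool" where
  "stationary_solution U' D xmax yp y y1 y2 \<longleftrightarrow>
     (\<forall>x\<in>{-xmax..xmax}. (y has_real_derivative y1 x) (at x within {-xmax..xmax})
                       \<and> (y1 has_real_derivative y2 x) (at x within {-xmax..xmax})) \<and>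
     (\<forall>x\<in>{-xmax<..<xmax}. 0 = - U' (y x) + D * y2 x) \<and>
     y (-xmax) = yp \<and> y xmax = yp"

definition pot_shaped ::
  "real \<Rightarrow> (real \<Rightarrow> real) \<Rightarrow> (real \<Rightarrow> real) \<Rightarrow> bool" where
  "pot_shaped xmax y y1 \<longleftrightarrow>
     y 0 < y xmax \<and> y 0 < y (-xmax) \<and> (\<forall>x\<in>{0<..<xmax}. y1 x \<ge> 0)"

end

theory Submission
  imports Defs
begin

(* Suppose y is a pot-shaped stationary solution with boundary
   value y+.  Since y(0) < y+, the minimum of y on [-xmax, xmax] is attained at an
   interior point m, where y'(m) = 0 and y(m) < y+.  Multiplying the stationary
   equation D y'' = U'(y) by y' shows that the "energy" E = D/2 y'^2 - U(y) is a first
   integral, hence E(m) = E(xmax), i.e.  -U(y m) = D/2 y'(xmax)^2 - U(y+) >= -U(y+). *)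

lemma interior_min_critical:
  fixes f f' :: "real \<Rightarrow> real" and a b c :: real
  assumes deriv: "\<And>x. x \<in> {a..b} \<Longrightarrow> (f has_real_derivative f' x) (at x within {a..b})"
    and c: "c \<in> {a..b}" and below: "f c < f a" "f c < f b"
  obtains m where "m \<in> {a<..<b}" "f m \<le> f c" "f' m = 0"
proof -
  have "continuous_on {a..b} f" using deriv by (rule DERIV_continuous_on)
  then obtain m where m: "m \<in> {a..b}" and fmin: "\<forall>z\<in>{a..b}. f m \<le> f z"
    using continuous_attains_inf[OF compact_Icc] c by blast
  have fmc: "f m \<le> f c" using fmin c by blast
  with below m have m_int: "a < m" "m < b" by (auto simp: less_le)
  have fderiv: "(f has_real_derivative f' m) (at m)"
    using deriv[OF m] by (simp add: at_within_Icc_at m_int)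
  have local_min: "\<forall>z. \<bar>m - z\<bar> < min (m - a) (b - m) \<longrightarrow> f m \<le> f z"
    using fmin by (auto simp: abs_less_iff)
  have "f' m = 0"
    by (rule DERIV_local_min[OF fderiv _ local_min]) (use m_int in simp)
  with m_int fmc show thesis using that by simp
qed

lemma energy_conservation:
  fixes U U' y y1 y2 :: "real \<Rightarrow> real" and D a b s t :: real
  assumes U_deriv: "\<And>z. (U has_real_derivative U' z) (at z)"
    and dy: "\<And>x. x \<in> {a..b} \<Longrightarrow> (y has_real_derivative y1 x) (at x within {a..b})"
    and dy1: "\<And>x. x \<in> {a..b} \<Longrightarrow> (y1 has_real_derivative y2 x) (at x within {a..b})"
    and ode: "\<And>x. x \<in> {a<..<b} \<Longrightarrow> D * y2 x = U' (y x)"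
    and s: "s \<in> {a..b}" and t: "t \<in> {a..b}"
  shows "D / 2 * (y1 s)\<^sup>2 - U (y s) = D / 2 * (y1 t)\<^sup>2 - U (y t)"
proof -
  define E where "E x = D / 2 * (y1 x)\<^sup>2 - U (y x)" for x
  have "E x = E a" if x: "x \<in> {a..b}" for x
  proof (cases "a < b")
    case True
    have cU: "continuous_on UNIV U"
      using U_deriv by (meson DERIV_continuous continuous_at_imp_continuous_on)
    have "continuous_on {a..b} E" unfolding E_def
      using DERIV_continuous_on[OF dy] DERIV_continuous_on[OF dy1]
      by (intro continuous_intros continuous_on_compose2[OF cU]) auto
    moreover have "DERIV E x :> 0" if "a < x" "x < b" for x
    proof -
      have d1: "DERIV y x :> y1 x" and d2: "DERIV y1 x :> y2 x"
        using dy[of x] dy1[of x] that by (auto simp: at_within_Icc_at)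
      have "DERIV E x :> D / 2 * (2 * y1 x * y2 x) - U' (y x) * y1 x"
        unfolding E_def
        using DERIV_power[OF d2, of 2] DERIV_chain2[OF U_deriv d1]
        by (intro DERIV_diff DERIV_cmult) (simp_all add: mult_ac)
      moreover have "D / 2 * (2 * y1 x * y2 x) - U' (y x) * y1 x = 0"
        using ode[of x] that by (simp add: algebra_simps)
      ultimately show ?thesis by (simp only:)
    qed
    ultimately show ?thesis using DERIV_isconst2[OF True] x by auto
  next
    case False
    with x have "x = a" by simp
    then show ?thesis by simp
  qed
  from this[OF s] this[OF t] show ?thesis unfolding E_def by simp
qed

theorem theorem1:
  fixes U U' U'' :: "real \<Rightarrow> real" and yp D xmax :: real
  assumes U_deriv: "\<And>z. (U has_real_derivative U' z) (at z)"
    and U'_deriv: "\<And>z. (U' has_real_derivative U'' z) (at z)"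
    and U''_cont: "continuous_on UNIV U''"
    and several: "\<exists>a b. a \<noteq> b \<and> local_minimizer U a \<and> local_minimizer U b"
    and yp_stable: "local_minimizer U yp"
    and yp_largest: "\<And>z. local_minimizer U z \<Longrightarrow> z \<le> yp"
    and yp_global: "\<And>z. z \<noteq> yp \<Longrightarrow> U yp < U z"
    and D_pos: "D > 0"
    and xmax_pos: "xmax > 0"
  shows "\<not> (\<exists>y y1 y2. stationary_solution U' D xmax yp y y1 y2 \<and> pot_shaped xmax y y1)"
proof
  assume "\<exists>y y1 y2. stationary_solution U' D xmax yp y y1 y2 \<and> pot_shaped xmax y y1"
  then obtain y y1 y2 where
        dy: "\<And>x. x \<in> {-xmax..xmax} \<Longrightarrow> (y has_real_derivative y1 x) (at x within {-xmax..xmax})"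
    and dy1: "\<And>x. x \<in> {-xmax..xmax} \<Longrightarrow> (y1 has_real_derivative y2 x) (at x within {-xmax..xmax})"
    and ode: "\<And>x. x \<in> {-xmax<..<xmax} \<Longrightarrow> D * y2 x = U' (y x)"
    and bdry: "y (-xmax) = yp" "y xmax = yp" and dip: "y 0 < yp"
    unfolding stationary_solution_def pot_shaped_def by fastforce
  obtain m where m: "m \<in> {-xmax<..<xmax}" "y m \<le> y 0" "y1 m = 0"
    using interior_min_critical[OF dy, of 0] xmax_pos dip bdry by auto
  have "D / 2 * (y1 m)\<^sup>2 - U (y m) = D / 2 * (y1 xmax)\<^sup>2 - U (y xmax)"
    using energy_conservation[OF U_deriv dy dy1 ode] m(1) xmax_pos by simp
  moreover have "0 \<le> D / 2 * (y1 xmax)\<^sup>2" using D_pos by simp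
  ultimately have "U (y m) \<le> U yp" using m(3) bdry(2) by simp
  moreover have "y m \<noteq> yp" using m(2) dip by simp
  ultimately show False using yp_global[of "y m"] by simp
qed

end
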